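(* Let $\Phi$ be a Young function such that the limits $p_0=\lim_{t\to0^+}\frac{t\Phi'(t)}{\Phi(t)}$ and $p_\infty=\lim_{t\to\infty}\frac{t\Phi'(t)}{\Phi(t)}$ exist as finite real numbers. Then $p_{[\Phi]}=\max\{p_0,p_\infty\}$ and $q_{[\Phi]}=\min\{p_0,p_\infty\}$.
   Context: A Young function is a convex function $\Phi:[0,\infty)\to[0,\infty)$ with $\Phi(0)=0$, $\Phi(t)>0$ for $t>0$, and $\lim_{t\to\infty}\Phi(t)=\infty$. $\Phi'$ denotes the right derivative of $\Phi$. The Lebesgue exponents of $\Phi$ are $p_\Phi=\sup_{t>0}\frac{t\Phi'(t)}{\Phi(t)}$ and $q_\Phi=\inf_{t>0}\frac{t\Phi'(t)}{\Phi(t)}$. Two Young functions $\Phi,\Psi$ are equivalent if there is $C\ge1$ with $C^{-1}\Psi(t)\le\Phi(t)\le C\Psi(t)$ for all $t\ge0$; $[\Phi]$ denotes the set of Young functions equivalent to $\Phi$, and $p_{[\Phi]}=\inf\{p_\Psi:\Psi\in[\Phi]\}$, $q_{[\Phi]}=\sup\{q_\Psi:\Psi\in[\Phi]\}$. *)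

theory Defs
  imports "HOL-Analysis.Analysis"
begin

text \<open>Young functions are modelled as real functions; only their values on [0,oo) matter.\<close>

definition young_function :: "(real \<Rightarrow> real) \<Rightarrow> bool" where
  "young_function \<Phi> \<longleftrightarrow>
     convex_on {0..} \<Phi> \<and> (\<forall>t\<ge>0. \<Phi> t \<ge> 0) \<and> \<Phi> 0 = 0 \<and>
     (\<forall>t>0. \<Phi> t > 0) \<and> filterlim \<Phi> at_top at_top"

definition rderiv :: "(real \<Rightarrow> real) \<Rightarrow> real \<Rightarrow> real" where
  "rderiv \<Phi> t = Lim (at_right 0) (\<lambda>h. (\<Phi> (t + h) - \<Phi> t) / h)"

text \<open>Lebesgue exponents (possibly infinite, hence extended reals).\<close>
definition upper_index :: "(real \<Rightarrow> real) \<Rightarrow> ereal" where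
  "upper_index \<Phi> = (SUP t\<in>{0<..}. ereal (t * rderiv \<Phi> t / \<Phi> t))"

definition lower_index :: "(real \<Rightarrow> real) \<Rightarrow> ereal" where
  "lower_index \<Phi> = (INF t\<in>{0<..}. ereal (t * rderiv \<Phi> t / \<Phi> t))"

definition young_equiv :: "(real \<Rightarrow> real) \<Rightarrow> (real \<Rightarrow> real) \<Rightarrow> bool" where
  "young_equiv \<Phi> \<Psi> \<longleftrightarrow> young_function \<Phi> \<and> young_function \<Psi> \<and>
     (\<exists>C\<ge>1. \<forall>t\<ge>0. \<Psi> t / C \<le> \<Phi> t \<and> \<Phi> t \<le> C * \<Psi> t)"

definition young_class :: "(real \<Rightarrow> real) \<Rightarrow> (real \<Rightarrow> real) set" where
  "young_class \<Phi> = {\<Psi>. young_equiv \<Phi> \<Psi>}"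

definition upper_index_class :: "(real \<Rightarrow> real) \<Rightarrow> ereal" where
  "upper_index_class \<Phi> = (INF \<Psi>\<in>young_class \<Phi>. upper_index \<Psi>)"

definition lower_index_class :: "(real \<Rightarrow> real) \<Rightarrow> ereal" where
  "lower_index_class \<Phi> = (SUP \<Psi>\<in>young_class \<Phi>. lower_index \<Psi>)"

end

theory Submission
  imports Defs
begin

(* Write i(t) = t \<Phi>'(t) / \<Phi>(t). Since t \<mapsto> \<Phi>(t) t^(-P) has right derivative of the sign of
   i(t) - P, a bound i \<le> P on [t, s t) integrates to \<Phi>(s t) \<le> s^P \<Phi>(t), and conversely.

   If P < max {p0, pinf}, then i > P on a whole interval [t, s t) near 0 or near infinity, so
   \<Phi>(s t) \<ge> s^P \<Phi>(t) there. An equivalent \<Psi> with p_\<Psi> \<le> U satisfies \<Psi>(s t) \<le> s^U \<Psi>(t) for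
   all t, and comparing the two through the equivalence constant C gives s^(P - U) \<le> C^2 for
   all s \<ge> 1, i.e. P \<le> U. Hence p_[\<Phi>] \<ge> max {p0, pinf}.

   If P > max {p0, pinf}, then \<Phi>(t) t^(-P) decreases near 0 and near infinity and is bounded
   above and below on the compact middle part, so \<Phi>(s t) \<le> K s^P \<Phi>(t) for all s \<ge> 1.
   Then \<Psi>(t) = sup_{s \<ge> 1} \<Phi>(s t) / s^P is a convex majorant of \<Phi>, at most K \<Phi>, with
   \<Psi>(s t) \<le> s^P \<Psi>(t) exactly; hence p_\<Psi> \<le> P. The lower index is handled symmetrically,
   with the supremum taken over s \<in> (0, 1]. *)

definition index_ratio :: "(real \<Rightarrow> real) \<Rightarrow> real \<Rightarrow> real" where
  "index_ratio \<Phi> t = t * rderiv \<Phi> t / \<Phi> t"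

lemma upper_index_le_iff: "upper_index \<Phi> \<le> ereal P \<longleftrightarrow> (\<forall>t>0. index_ratio \<Phi> t \<le> P)"
  by (auto simp: upper_index_def index_ratio_def SUP_le_iff)

lemma lower_index_ge_iff: "ereal Q \<le> lower_index \<Phi> \<longleftrightarrow> (\<forall>t>0. Q \<le> index_ratio \<Phi> t)"
  by (auto simp: lower_index_def index_ratio_def le_INF_iff)

lemma young_function_pos: "young_function F \<Longrightarrow> 0 < t \<Longrightarrow> 0 < F t"
  by (simp add: young_function_def)

lemma young_function_continuous_on:
  assumes "young_function F"
  shows "continuous_on {0<..} F"
proof -
  have "convex_on {0<..} F"
    using assms by (auto simp: young_function_def intro: convex_on_subset)
  then show ?thesis
    by (intro convex_on_continuous) auto
qed

text \<open>The difference quotients of a convex function decrease as the step shrinks and are bounded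
  below by the slope of the chord from the origin, so they converge.\<close>
lemma young_function_has_rderiv:
  assumes F: "young_function F" and t: "0 < t"
  shows "(F has_real_derivative rderiv F t) (at_right t)"
proof -
  have cvx: "convex_on {0..} F" and F0: "F 0 = 0"
    using F by (simp_all add: young_function_def)
  define q where "q = (\<lambda>y. (F y - F t) / (y - t))"
  have q_swap: "q y = (F t - F y) / (t - y)" for y
    unfolding q_def by (metis minus_diff_eq minus_divide_divide)
  have q_mono: "q a \<le> q b" if "a \<in> UNIV" "b \<in> UNIV" "t < a" "a \<le> b" for a b
  proof (cases "a = b")
    case False
    then show ?thesis
      using convex_on_slope_le(1)[OF cvx, of t b a] that t by (simp add: q_swap)
  qed simp
  have q_bound: "F t / t \<le> q a" if "a \<in> UNIV" "t < a" for a
    using convex_on_slope_le[OF cvx, of 0 a t] that t F0 by (simp add: q_swap)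
  have "(q \<longlongrightarrow> Inf (q ` ({t<..} \<inter> UNIV))) (at t within ({t<..} \<inter> UNIV))"
    by (rule Lim_right_bound[OF q_mono q_bound])
  then have D: "(F has_real_derivative Inf (q ` {t<..})) (at_right t)"
    by (simp add: has_field_derivative_iff q_def)
  have "((\<lambda>h. (F (h + t) - F t) / (h + t - t)) \<longlongrightarrow> Inf (q ` {t<..})) (at_right 0)"
    using D unfolding has_field_derivative_iff
    by (subst (asm) at_right_to_0) (simp add: filterlim_filtermap)
  then have "rderiv F t = Inf (q ` {t<..})"
    unfolding rderiv_def by (intro tendsto_Lim) (simp_all add: add.commute)
  with D show ?thesis
    by simp
qed

lemma young_equiv_bounds:
  assumes "young_equiv F G"
  obtains C where "1 \<le> C" "\<And>t. 0 \<le> t \<Longrightarrow> F t \<le> C * G t" "\<And>t. 0 \<le> t \<Longrightarrow> G t \<le> C * F t"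
proof -
  obtain C where "1 \<le> C" and C: "\<And>t. 0 \<le> t \<Longrightarrow> G t / C \<le> F t \<and> F t \<le> C * G t"
    using assms by (auto simp: young_equiv_def)
  moreover have "G t \<le> C * F t" if "0 \<le> t" for t
    using C[OF that] \<open>1 \<le> C\<close> by (simp add: divide_le_eq mult.commute)
  ultimately show ?thesis
    using that by blast
qed

section \<open>Monotonicity from one-sided derivatives\<close>

text \<open>The largest point c of the sublevel set {x. g x \<le> g s} is u: a negative right derivative
  at c < u would put points to the right of c into it.\<close>
lemma right_derivative_neg_imp_le:
  fixes g :: "real \<Rightarrow> real"
  assumes "s \<le> u" and cont: "continuous_on {s..u} g"
    and deriv: "\<And>r. s \<le> r \<Longrightarrow> r < u \<Longrightarrow> \<exists>D<0. (g has_real_derivative D) (at_right r)"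
  shows "g u \<le> g s"
proof -
  define S where "S = {s..u} \<inter> g -` {..g s}"
  define c where "c = Sup S"
  have "closed S"
    unfolding S_def by (rule continuous_closed_preimage[OF cont]) auto
  moreover have "s \<in> S" and bdd: "bdd_above S"
    using \<open>s \<le> u\<close> by (auto simp: S_def bdd_above_def)
  ultimately have c: "c \<in> S"
    unfolding c_def by (intro closed_contains_Sup) auto
  have "c = u"
  proof (rule ccontr)
    assume "c \<noteq> u"
    with c have "s \<le> c" "c < u"
      by (auto simp: S_def)
    then obtain D where "D < 0" "(g has_real_derivative D) (at c within {c<..})"
      using deriv by blast
    then obtain d where "d > 0" and dec: "\<forall>h>0. c + h \<in> {c<..} \<longrightarrow> h < d \<longrightarrow> g (c + h) < g c"
      using has_real_derivative_neg_dec_right by blast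
    define h where "h = min d (u - c) / 2"
    have h: "0 < h" "h < d" "c + h \<le> u"
      using \<open>d > 0\<close> \<open>c < u\<close> by (auto simp: h_def min_def field_simps)
    with dec c \<open>s \<le> c\<close> have "c + h \<in> S"
      by (auto simp: S_def)
    then have "c + h \<le> c"
      unfolding c_def using bdd by (rule cSup_upper)
    with h show False
      by simp
  qed
  with c show ?thesis
    by (simp add: S_def)
qed

lemma right_derivative_nonpos_imp_le:
  fixes g :: "real \<Rightarrow> real"
  assumes "s \<le> u" and cont: "continuous_on {s..u} g"
    and deriv: "\<And>r. s \<le> r \<Longrightarrow> r < u \<Longrightarrow> \<exists>D\<le>0. (g has_real_derivative D) (at_right r)"
  shows "g u \<le> g s"
proof (rule field_le_epsilon)
  fix e :: real
  assume "0 < e"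
  define k where "k = e / (u - s + 1)"
  have "0 < k" and "k * (u - s + 1) = e"
    using \<open>0 < e\<close> \<open>s \<le> u\<close> by (simp_all add: k_def)
  then have k: "0 < k" "k * (u - s) \<le> e"
    by (simp_all add: algebra_simps)
  have "g u - k * u \<le> g s - k * s"
  proof (rule right_derivative_neg_imp_le[OF \<open>s \<le> u\<close>])
    show "continuous_on {s..u} (\<lambda>x. g x - k * x)"
      by (intro continuous_intros cont)
    fix r
    assume "s \<le> r" "r < u"
    then obtain D where "D \<le> 0" "(g has_real_derivative D) (at_right r)"
      using deriv by blast
    then have "((\<lambda>x. g x - k * x) has_real_derivative D - k) (at_right r)"
      by (auto intro!: derivative_eq_intros)
    with \<open>D \<le> 0\<close> \<open>0 < k\<close> show "\<exists>D<0. ((\<lambda>x. g x - k * x) has_real_derivative D) (at_right r)"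
      by (intro exI[of _ "D - k"]) auto
  qed
  with k show "g u \<le> g s + e"
    by (simp add: algebra_simps)
qed

lemma right_derivative_nonneg_imp_le:
  fixes g :: "real \<Rightarrow> real"
  assumes "s \<le> u" and cont: "continuous_on {s..u} g"
    and deriv: "\<And>r. s \<le> r \<Longrightarrow> r < u \<Longrightarrow> \<exists>D\<ge>0. (g has_real_derivative D) (at_right r)"
  shows "g s \<le> g u"
proof -
  have "- g u \<le> - g s"
  proof (rule right_derivative_nonpos_imp_le[OF \<open>s \<le> u\<close>])
    show "continuous_on {s..u} (\<lambda>x. - g x)"
      by (intro continuous_intros cont)
    fix r
    assume "s \<le> r" "r < u"
    then obtain D where "0 \<le> D" "(g has_real_derivative D) (at_right r)"
      using deriv by blast
    then show "\<exists>D\<le>0. ((\<lambda>x. - g x) has_real_derivative D) (at_right r)"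
      by (intro exI[of _ "- D"]) (auto intro: DERIV_minus)
  qed
  then show ?thesis
    by simp
qed

lemma has_real_derivative_at_right_nonpos:
  assumes "(g has_real_derivative D) (at_right r)" and "\<And>y. r < y \<Longrightarrow> g y \<le> g r"
  shows "D \<le> 0"
proof (rule ccontr)
  assume "\<not> D \<le> 0"
  then obtain d where "0 < d" and inc: "\<forall>h>0. r + h \<in> {r<..} \<longrightarrow> h < d \<longrightarrow> g r < g (r + h)"
    using has_real_derivative_pos_inc_right[OF assms(1)] by auto
  then have "g r < g (r + d / 2)"
    using inc[rule_format, of "d / 2"] by simp
  with assms(2)[of "r + d / 2"] \<open>0 < d\<close> show False
    by simp
qed

lemma has_real_derivative_at_right_nonneg:
  assumes "(g has_real_derivative D) (at_right r)" and "\<And>y. r < y \<Longrightarrow> g r \<le> g y"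
  shows "0 \<le> D"
  using has_real_derivative_at_right_nonpos[OF DERIV_minus[OF assms(1)]] assms(2) by force

section \<open>Index ratio bounds and dilation inequalities\<close>

lemma has_rderiv_young_times_powr:
  assumes F: "young_function F" and r: "0 < r"
  shows "((\<lambda>x. F x * x powr -P) has_real_derivative
           F r * r powr (-P - 1) * (index_ratio F r - P)) (at_right r)"
proof -
  have "r powr -P = r powr (-P - 1) * r"
    using powr_add[of r "-P - 1" 1] r by simp
  then have deriv_eq: "F r * r powr (-P - 1) * (index_ratio F r - P) =
      rderiv F r * r powr -P + (-P * r powr (-P - 1)) * F r"
    using young_function_pos[OF F r] by (simp add: index_ratio_def field_simps)
  show ?thesis
    unfolding deriv_eq
    by (rule DERIV_mult[OF young_function_has_rderiv[OF F r]
          has_field_derivative_at_within[OF has_real_derivative_powr[OF r]]])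
qed

lemma continuous_on_young_times_powr:
  assumes "young_function F" and "0 < s"
  shows "continuous_on {s..u} (\<lambda>x. F x * x powr -P)"
  using assms
  by (intro continuous_intros continuous_on_subset[OF young_function_continuous_on]) auto

lemma young_times_powr_antimono:
  assumes F: "young_function F" and "0 < s" "s \<le> u"
    and ratio: "\<And>r. s \<le> r \<Longrightarrow> r < u \<Longrightarrow> index_ratio F r \<le> P"
  shows "F u * u powr -P \<le> F s * s powr -P"
proof (rule right_derivative_nonpos_imp_le[OF \<open>s \<le> u\<close> continuous_on_young_times_powr[OF F \<open>0 < s\<close>]])
  fix r
  assume r: "s \<le> r" "r < u"
  with \<open>0 < s\<close> have "0 < r" "0 < F r"
    using young_function_pos[OF F] by auto
  then have "F r * r powr (-P - 1) * (index_ratio F r - P) \<le> 0"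
    using ratio[OF r] by (intro mult_nonneg_nonpos) auto
  then show "\<exists>D\<le>0. ((\<lambda>x. F x * x powr -P) has_real_derivative D) (at_right r)"
    using has_rderiv_young_times_powr[OF F \<open>0 < r\<close>] by blast
qed

lemma young_times_powr_mono:
  assumes F: "young_function F" and "0 < s" "s \<le> u"
    and ratio: "\<And>r. s \<le> r \<Longrightarrow> r < u \<Longrightarrow> P \<le> index_ratio F r"
  shows "F s * s powr -P \<le> F u * u powr -P"
proof (rule right_derivative_nonneg_imp_le[OF \<open>s \<le> u\<close> continuous_on_young_times_powr[OF F \<open>0 < s\<close>]])
  fix r
  assume r: "s \<le> r" "r < u"
  with \<open>0 < s\<close> have "0 < r" "0 < F r"
    using young_function_pos[OF F] by auto
  then have "0 \<le> F r * r powr (-P - 1) * (index_ratio F r - P)"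
    using ratio[OF r] by simp
  then show "\<exists>D\<ge>0. ((\<lambda>x. F x * x powr -P) has_real_derivative D) (at_right r)"
    using has_rderiv_young_times_powr[OF F \<open>0 < r\<close>] by blast
qed

lemma times_powr_dilation_le_iff:
  fixes a b s t P :: real
  assumes "0 < s" "0 < t"
  shows "a * (s * t) powr -P \<le> b * t powr -P \<longleftrightarrow> a \<le> s powr P * b"
proof -
  have "a * (s * t) powr -P = (a / s powr P) * t powr -P"
    using assms by (simp add: powr_mult powr_minus divide_inverse)
  then show ?thesis
    using assms by (simp add: pos_divide_le_eq mult.commute)
qed

lemma times_powr_dilation_ge_iff:
  fixes a b s t P :: real
  assumes "0 < s" "0 < t"
  shows "b * t powr -P \<le> a * (s * t) powr -P \<longleftrightarrow> s powr P * b \<le> a"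
proof -
  have "a * (s * t) powr -P = (a / s powr P) * t powr -P"
    using assms by (simp add: powr_mult powr_minus divide_inverse)
  then show ?thesis
    using assms by (simp add: pos_le_divide_eq mult.commute)
qed

lemma index_ratio_le_imp_dilation_le:
  assumes F: "young_function F" and "0 < t" "1 \<le> s"
    and ratio: "\<And>r. r \<in> {t..<s * t} \<Longrightarrow> index_ratio F r \<le> P"
  shows "F (s * t) \<le> s powr P * F t"
proof -
  have "F (s * t) * (s * t) powr -P \<le> F t * t powr -P"
    using assms by (intro young_times_powr_antimono) auto
  with assms show ?thesis
    by (simp add: times_powr_dilation_le_iff)
qed

lemma index_ratio_ge_imp_dilation_ge:
  assumes F: "young_function F" and "0 < t" "1 \<le> s"
    and ratio: "\<And>r. r \<in> {t..<s * t} \<Longrightarrow> P \<le> index_ratio F r"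
  shows "s powr P * F t \<le> F (s * t)"
proof -
  have "F t * t powr -P \<le> F (s * t) * (s * t) powr -P"
    using assms by (intro young_times_powr_mono) auto
  with assms show ?thesis
    by (simp add: times_powr_dilation_ge_iff)
qed

lemma dilation_le_imp_index_ratio_le:
  assumes G: "young_function G" and "0 < t"
    and dilation: "\<And>s. 1 \<le> s \<Longrightarrow> G (s * t) \<le> s powr P * G t"
  shows "index_ratio G t \<le> P"
proof -
  have "G y * y powr -P \<le> G t * t powr -P" if "t < y" for y
  proof -
    have "G ((y / t) * t) * ((y / t) * t) powr -P \<le> G t * t powr -P"
      using dilation[of "y / t"] that \<open>0 < t\<close> by (subst times_powr_dilation_le_iff) auto
    with \<open>0 < t\<close> show ?thesis
      by simp
  qed
  then have "G t * t powr (-P - 1) * (index_ratio G t - P) \<le> 0"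
    by (intro has_real_derivative_at_right_nonpos[OF has_rderiv_young_times_powr[OF G \<open>0 < t\<close>]])
  then show ?thesis
    using young_function_pos[OF G \<open>0 < t\<close>] \<open>0 < t\<close> by (simp add: mult_le_0_iff)
qed

lemma dilation_ge_imp_index_ratio_ge:
  assumes G: "young_function G" and "0 < t"
    and dilation: "\<And>s. 1 \<le> s \<Longrightarrow> s powr Q * G t \<le> G (s * t)"
  shows "Q \<le> index_ratio G t"
proof -
  have "G t * t powr -Q \<le> G y * y powr -Q" if "t < y" for y
  proof -
    have "G t * t powr -Q \<le> G ((y / t) * t) * ((y / t) * t) powr -Q"
      using dilation[of "y / t"] that \<open>0 < t\<close> by (subst times_powr_dilation_ge_iff) auto
    with \<open>0 < t\<close> show ?thesis
      by simp
  qed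
  then have "0 \<le> G t * t powr (-Q - 1) * (index_ratio G t - Q)"
    by (intro has_real_derivative_at_right_nonneg[OF has_rderiv_young_times_powr[OF G \<open>0 < t\<close>]])
  moreover have "0 < G t * t powr (-Q - 1)"
    using young_function_pos[OF G \<open>0 < t\<close>] \<open>0 < t\<close> by simp
  ultimately show ?thesis
    by (simp add: zero_le_mult_iff)
qed

lemma powr_bounded_imp_exponent_nonpos:
  fixes e M :: real
  assumes "\<And>s. 1 \<le> s \<Longrightarrow> s powr e \<le> M"
  shows "e \<le> 0"
proof (rule ccontr)
  assume "\<not> e \<le> 0"
  define s where "s = max 1 (M + 1) powr (1 / e)"
  have "1 \<le> s"
    unfolding s_def using \<open>\<not> e \<le> 0\<close> by (intro ge_one_powr_ge_zero) auto
  moreover have "s powr e = max 1 (M + 1)"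
    using \<open>\<not> e \<le> 0\<close> by (simp add: s_def powr_powr)
  ultimately show False
    using assms[of s] by linarith
qed

lemma young_equiv_exponent_le:
  assumes equiv: "young_equiv F G"
    and G_ratio: "\<And>t. 0 < t \<Longrightarrow> index_ratio G t \<le> U"
    and F_growth: "\<And>s. 1 \<le> s \<Longrightarrow> \<exists>t>0. s powr P * F t \<le> F (s * t)"
  shows "P \<le> U"
proof -
  have F: "young_function F" and G: "young_function G"
    using equiv by (simp_all add: young_equiv_def)
  obtain C where "1 \<le> C" and FG: "\<And>t. 0 \<le> t \<Longrightarrow> F t \<le> C * G t"
    and GF: "\<And>t. 0 \<le> t \<Longrightarrow> G t \<le> C * F t"
    using young_equiv_bounds[OF equiv] by blast
  have "s powr (P - U) \<le> C\<^sup>2" if s: "1 \<le> s" for s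
  proof -
    obtain t where "0 < t" and growth: "s powr P * F t \<le> F (s * t)"
      using F_growth[OF s] by blast
    have "F (s * t) \<le> C * G (s * t)"
      using FG \<open>0 < t\<close> s by simp
    also have "\<dots> \<le> C * (s powr U * G t)"
      using index_ratio_le_imp_dilation_le[OF G \<open>0 < t\<close> s] G_ratio \<open>0 < t\<close> \<open>1 \<le> C\<close>
      by (force intro: mult_left_mono)
    also have "\<dots> \<le> C * (s powr U * (C * F t))"
      using GF \<open>0 < t\<close> \<open>1 \<le> C\<close> by (simp add: mult_left_mono)
    finally have "s powr P * F t \<le> (C\<^sup>2 * s powr U) * F t"
      using growth by (simp add: power2_eq_square mult_ac)
    then have "s powr P \<le> C\<^sup>2 * s powr U"
      using young_function_pos[OF F \<open>0 < t\<close>] by simp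
    then show ?thesis
      using s by (simp add: powr_diff divide_le_eq)
  qed
  then show ?thesis
    using powr_bounded_imp_exponent_nonpos by force
qed

lemma young_equiv_exponent_ge:
  assumes equiv: "young_equiv F G"
    and G_ratio: "\<And>t. 0 < t \<Longrightarrow> L \<le> index_ratio G t"
    and F_growth: "\<And>s. 1 \<le> s \<Longrightarrow> \<exists>t>0. F (s * t) \<le> s powr Q * F t"
  shows "L \<le> Q"
proof -
  have G: "young_function G"
    using equiv by (simp add: young_equiv_def)
  obtain C where "1 \<le> C" and FG: "\<And>t. 0 \<le> t \<Longrightarrow> F t \<le> C * G t"
    and GF: "\<And>t. 0 \<le> t \<Longrightarrow> G t \<le> C * F t"
    using young_equiv_bounds[OF equiv] by blast
  have "s powr (L - Q) \<le> C\<^sup>2" if s: "1 \<le> s" for s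
  proof -
    obtain t where "0 < t" and growth: "F (s * t) \<le> s powr Q * F t"
      using F_growth[OF s] by blast
    have "s powr L * G t \<le> G (s * t)"
      using index_ratio_ge_imp_dilation_ge[OF G \<open>0 < t\<close> s] G_ratio \<open>0 < t\<close> by force
    also have "\<dots> \<le> C * F (s * t)"
      using GF \<open>0 < t\<close> s by simp
    also have "\<dots> \<le> C * (s powr Q * F t)"
      using growth \<open>1 \<le> C\<close> by simp
    also have "\<dots> \<le> C * (s powr Q * (C * G t))"
      using FG \<open>0 < t\<close> \<open>1 \<le> C\<close> by (simp add: mult_left_mono)
    finally have "s powr L * G t \<le> (C\<^sup>2 * s powr Q) * G t"
      by (simp add: power2_eq_square mult_ac)
    then have "s powr L \<le> C\<^sup>2 * s powr Q"
      using young_function_pos[OF G \<open>0 < t\<close>] by simp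
    then show ?thesis
      using s by (simp add: powr_diff divide_le_eq)
  qed
  then show ?thesis
    using powr_bounded_imp_exponent_nonpos by force
qed

section \<open>Uniform dilation bounds\<close>

lemma eventually_imp_dilation_interval:
  fixes Q :: "real \<Rightarrow> bool"
  assumes "eventually Q at_top \<or> eventually Q (at_right 0)" and "1 \<le> s"
  shows "\<exists>t>0. \<forall>r\<in>{t..<s * t}. Q r"
  using assms(1)
proof
  assume "eventually Q at_top"
  then obtain b where "\<And>r. b \<le> r \<Longrightarrow> Q r"
    by (auto simp: eventually_at_top_linorder)
  then show ?thesis
    by (intro exI[of _ "max b 1"]) auto
next
  assume "eventually Q (at_right 0)"
  then obtain a where "0 < a" and a: "\<And>r. 0 < r \<Longrightarrow> r < a \<Longrightarrow> Q r"
    by (auto simp: eventually_at_right_field)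
  have "0 < a / (2 * s)" "s * (a / (2 * s)) < a"
    using \<open>0 < a\<close> \<open>1 \<le> s\<close> by auto
  then show ?thesis
    using a by (intro exI[of _ "a / (2 * s)"]) force
qed

lemma eventually_at_right_0_and_at_top_E:
  fixes Q :: "real \<Rightarrow> bool"
  assumes "eventually Q (at_right 0)" and "eventually Q at_top"
  obtains a b where "0 < a" "a \<le> b"
    and "\<And>r. 0 < r \<Longrightarrow> r \<le> a \<Longrightarrow> Q r" "\<And>r. b \<le> r \<Longrightarrow> Q r"
proof -
  obtain a where "0 < a" and a: "\<And>r. 0 < r \<Longrightarrow> r < a \<Longrightarrow> Q r"
    using assms(1) by (auto simp: eventually_at_right_field)
  obtain b where b: "\<And>r. b \<le> r \<Longrightarrow> Q r"
    using assms(2) by (auto simp: eventually_at_top_linorder)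
  show ?thesis
    by (rule that[of "a / 2" "max b (a / 2)"]) (use \<open>0 < a\<close> a b in auto)
qed

lemma antimono_near_ends_imp_quasi_antimono:
  fixes R :: "real \<Rightarrow> real"
  assumes "0 < a" "a \<le> b" and cont: "continuous_on {a..b} R" and pos: "\<And>x. 0 < x \<Longrightarrow> 0 < R x"
    and near0: "\<And>x y. 0 < x \<Longrightarrow> x \<le> y \<Longrightarrow> y \<le> a \<Longrightarrow> R y \<le> R x"
    and near_top: "\<And>x y. b \<le> x \<Longrightarrow> x \<le> y \<Longrightarrow> R y \<le> R x"
  shows "\<exists>K. \<forall>u v. 0 < u \<longrightarrow> u \<le> v \<longrightarrow> R v \<le> K * R u"
proof -
  have "{a..b} \<noteq> {}"
    using \<open>a \<le> b\<close> by simp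
  then obtain x\<^sub>M x\<^sub>m where "x\<^sub>M \<in> {a..b}" "x\<^sub>m \<in> {a..b}"
    and R_max: "\<And>y. y \<in> {a..b} \<Longrightarrow> R y \<le> R x\<^sub>M"
    and R_min: "\<And>y. y \<in> {a..b} \<Longrightarrow> R x\<^sub>m \<le> R y"
    using continuous_attains_sup[OF compact_Icc _ cont] continuous_attains_inf[OF compact_Icc _ cont]
    by metis
  define K where "K = R x\<^sub>M / R x\<^sub>m"
  have "0 < R x\<^sub>m"
    using pos \<open>x\<^sub>m \<in> {a..b}\<close> \<open>0 < a\<close> by simp
  then have "1 \<le> K" and "R x\<^sub>M = K * R x\<^sub>m"
    using R_min[OF \<open>x\<^sub>M \<in> {a..b}\<close>] by (simp_all add: K_def)
  have "R v \<le> K * R u" if "0 < u" "u \<le> v" for u v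
  proof -
    have "R u \<le> K * R u"
      using \<open>1 \<le> K\<close> pos[OF \<open>0 < u\<close>] by simp
    consider "v \<le> a" | "b \<le> u" | "a < v" "u < b"
      by linarith
    then show ?thesis
    proof cases
      case 1
      then show ?thesis
        using near0 that \<open>R u \<le> K * R u\<close> by (meson order_trans)
    next
      case 2
      then show ?thesis
        using near_top that \<open>R u \<le> K * R u\<close> by (meson order_trans)
    next
      case 3
      have "R v \<le> R (min v b)"
        using near_top[of b v] \<open>a \<le> b\<close> by (cases "v \<le> b") (auto simp: min_def)
      also have "\<dots> \<le> K * R x\<^sub>m"
        using R_max[of "min v b"] 3 \<open>a \<le> b\<close> \<open>R x\<^sub>M = K * R x\<^sub>m\<close> by auto
      also have "\<dots> \<le> K * R (max u a)"
        using R_min[of "max u a"] 3 \<open>a \<le> b\<close> \<open>1 \<le> K\<close> by auto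
      also have "\<dots> \<le> K * R u"
        using near0[of u a] that \<open>1 \<le> K\<close> by (cases "u \<le> a") (auto simp: max_def)
      finally show ?thesis .
    qed
  qed
  then show ?thesis
    by blast
qed

lemma mono_near_ends_imp_quasi_mono:
  fixes R :: "real \<Rightarrow> real"
  assumes "0 < a" "a \<le> b" and cont: "continuous_on {a..b} R" and pos: "\<And>x. 0 < x \<Longrightarrow> 0 < R x"
    and near0: "\<And>x y. 0 < x \<Longrightarrow> x \<le> y \<Longrightarrow> y \<le> a \<Longrightarrow> R x \<le> R y"
    and near_top: "\<And>x y. b \<le> x \<Longrightarrow> x \<le> y \<Longrightarrow> R x \<le> R y"
  shows "\<exists>K. \<forall>u v. 0 < u \<longrightarrow> u \<le> v \<longrightarrow> R u \<le> K * R v"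
proof -
  have "\<exists>K. \<forall>u v. 0 < u \<longrightarrow> u \<le> v \<longrightarrow> inverse (R v) \<le> K * inverse (R u)"
  proof (rule antimono_near_ends_imp_quasi_antimono[OF \<open>0 < a\<close> \<open>a \<le> b\<close>])
    have "\<forall>x\<in>{a..b}. R x \<noteq> 0"
      using pos \<open>0 < a\<close> by (metis atLeastAtMost_iff less_le_trans less_irrefl)
    with cont show "continuous_on {a..b} (\<lambda>x. inverse (R x))"
      by (rule continuous_on_inverse)
    show "0 < inverse (R x)" if "0 < x" for x
      using pos[OF that] by (rule positive_imp_inverse_positive)
    show "inverse (R y) \<le> inverse (R x)" if "0 < x" "x \<le> y" "y \<le> a" for x y
      using near0[OF that] pos[OF that(1)] by (rule le_imp_inverse_le)
    show "inverse (R y) \<le> inverse (R x)" if "b \<le> x" "x \<le> y" for x y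
      using near_top[OF that] pos[of x] that \<open>0 < a\<close> \<open>a \<le> b\<close> by (intro le_imp_inverse_le) auto
  qed
  then obtain K where K: "\<And>u v. 0 < u \<Longrightarrow> u \<le> v \<Longrightarrow> inverse (R v) \<le> K * inverse (R u)"
    by blast
  have "R u \<le> K * R v" if "0 < u" "u \<le> v" for u v
    using K[OF that] pos[of u] pos[of v] that by (simp add: field_simps)
  then show ?thesis
    by blast
qed

lemma index_ratio_le_near_ends_imp_dilation_bound:
  assumes F: "young_function F"
    and "eventually (\<lambda>r. index_ratio F r \<le> P) (at_right 0)"
    and "eventually (\<lambda>r. index_ratio F r \<le> P) at_top"
  shows "\<exists>K. \<forall>t s. 0 < t \<longrightarrow> 1 \<le> s \<longrightarrow> F (s * t) \<le> K * (s powr P * F t)"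
proof -
  obtain a b where ab: "0 < a" "a \<le> b"
    and near0: "\<And>r. 0 < r \<Longrightarrow> r \<le> a \<Longrightarrow> index_ratio F r \<le> P"
    and near_top: "\<And>r. b \<le> r \<Longrightarrow> index_ratio F r \<le> P"
    using eventually_at_right_0_and_at_top_E[OF assms(2,3)] by blast
  have "\<exists>K. \<forall>u v. 0 < u \<longrightarrow> u \<le> v \<longrightarrow> F v * v powr -P \<le> K * (F u * u powr -P)"
  proof (rule antimono_near_ends_imp_quasi_antimono[OF ab continuous_on_young_times_powr[OF F \<open>0 < a\<close>]])
    show "0 < F x * x powr -P" if "0 < x" for x
      using young_function_pos[OF F that] that by simp
    show "F y * y powr -P \<le> F x * x powr -P" if "0 < x" "x \<le> y" "y \<le> a" for x y
      using that near0 by (intro young_times_powr_antimono[OF F]) auto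
    show "F y * y powr -P \<le> F x * x powr -P" if "b \<le> x" "x \<le> y" for x y
      using that near_top ab by (intro young_times_powr_antimono[OF F]) auto
  qed
  then obtain K where K: "\<And>u v. 0 < u \<Longrightarrow> u \<le> v \<Longrightarrow> F v * v powr -P \<le> K * (F u * u powr -P)"
    by blast
  have "F (s * t) \<le> K * (s powr P * F t)" if "0 < t" "1 \<le> s" for t s
  proof -
    have "F (s * t) * (s * t) powr -P \<le> (K * F t) * t powr -P"
      using K[of t "s * t"] mult_right_mono[of 1 s t] that by (simp add: mult.assoc)
    then have "F (s * t) \<le> s powr P * (K * F t)"
      using that by (subst (asm) times_powr_dilation_le_iff) auto
    then show ?thesis
      by (simp add: mult_ac)
  qed
  then show ?thesis
    by blast
qed

lemma index_ratio_ge_near_ends_imp_dilation_bound: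
  assumes F: "young_function F"
    and "eventually (\<lambda>r. Q \<le> index_ratio F r) (at_right 0)"
    and "eventually (\<lambda>r. Q \<le> index_ratio F r) at_top"
  shows "\<exists>K. \<forall>t s. 0 < t \<longrightarrow> 1 \<le> s \<longrightarrow> s powr Q * F t \<le> K * F (s * t)"
proof -
  obtain a b where ab: "0 < a" "a \<le> b"
    and near0: "\<And>r. 0 < r \<Longrightarrow> r \<le> a \<Longrightarrow> Q \<le> index_ratio F r"
    and near_top: "\<And>r. b \<le> r \<Longrightarrow> Q \<le> index_ratio F r"
    using eventually_at_right_0_and_at_top_E[OF assms(2,3)] by blast
  have "\<exists>K. \<forall>u v. 0 < u \<longrightarrow> u \<le> v \<longrightarrow> F u * u powr -Q \<le> K * (F v * v powr -Q)"
  proof (rule mono_near_ends_imp_quasi_mono[OF ab continuous_on_young_times_powr[OF F \<open>0 < a\<close>]])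
    show "0 < F x * x powr -Q" if "0 < x" for x
      using young_function_pos[OF F that] that by simp
    show "F x * x powr -Q \<le> F y * y powr -Q" if "0 < x" "x \<le> y" "y \<le> a" for x y
      using that near0 by (intro young_times_powr_mono[OF F]) auto
    show "F x * x powr -Q \<le> F y * y powr -Q" if "b \<le> x" "x \<le> y" for x y
      using that near_top ab by (intro young_times_powr_mono[OF F]) auto
  qed
  then obtain K where K: "\<And>u v. 0 < u \<Longrightarrow> u \<le> v \<Longrightarrow> F u * u powr -Q \<le> K * (F v * v powr -Q)"
    by blast
  have "s powr Q * F t \<le> K * F (s * t)" if "0 < t" "1 \<le> s" for t s
  proof -
    have "F t * t powr -Q \<le> (K * F (s * t)) * (s * t) powr -Q"
      using K[of t "s * t"] mult_right_mono[of 1 s t] that by (simp add: mult.assoc)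
    with that show ?thesis
      by (subst (asm) times_powr_dilation_ge_iff) auto
  qed
  then show ?thesis
    by blast
qed

section \<open>Dilation suprema\<close>

text \<open>For L = {1..} one has dilation_sup F L P t = t^P sup {F s * s powr -P | s \<ge> t}: the least
  majorant of F whose product with t powr -P is nonincreasing. For L = {0<..1} the supremum runs
  over s \<le> t instead.\<close>
definition dilation_sup :: "(real \<Rightarrow> real) \<Rightarrow> real set \<Rightarrow> real \<Rightarrow> real \<Rightarrow> real" where
  "dilation_sup F L P t = (SUP l\<in>L. F (l * t) / l powr P)"

context
  fixes F :: "real \<Rightarrow> real" and L :: "real set" and P K :: real
  assumes young: "young_function F" and L_pos: "L \<subseteq> {0<..}" and one_in_L: "1 \<in> L"
    and dilation_bound: "\<And>t l. 0 \<le> t \<Longrightarrow> l \<in> L \<Longrightarrow> F (l * t) / l powr P \<le> K * F t"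
begin

lemma bdd_above_dilations: "0 \<le> t \<Longrightarrow> bdd_above ((\<lambda>l. F (l * t) / l powr P) ` L)"
  using dilation_bound by (intro bdd_aboveI2) auto

lemma le_dilation_sup: "0 \<le> t \<Longrightarrow> F t \<le> dilation_sup F L P t"
  using cSUP_upper[OF one_in_L bdd_above_dilations] by (simp add: dilation_sup_def)

lemma dilation_sup_le: "0 \<le> t \<Longrightarrow> dilation_sup F L P t \<le> K * F t"
  using one_in_L dilation_bound unfolding dilation_sup_def by (intro cSUP_least) auto

lemma convex_on_dilation_sup: "convex_on {0..} (dilation_sup F L P)"
proof (rule convex_onI)
  fix \<mu> x y :: real
  assume \<mu>: "0 < \<mu>" "\<mu> < 1" and xy: "x \<in> {0..}" "y \<in> {0..}"
  have cvx: "convex_on {0..} F"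
    using young by (simp add: young_function_def)
  show "dilation_sup F L P ((1 - \<mu>) *\<^sub>R x + \<mu> *\<^sub>R y) \<le>
      (1 - \<mu>) * dilation_sup F L P x + \<mu> * dilation_sup F L P y"
    unfolding dilation_sup_def
  proof (rule cSUP_least)
    show "L \<noteq> {}"
      using one_in_L by blast
    fix l
    assume "l \<in> L"
    then have "0 < l"
      using L_pos by auto
    have "F (l * ((1 - \<mu>) *\<^sub>R x + \<mu> *\<^sub>R y)) = F ((1 - \<mu>) *\<^sub>R (l * x) + \<mu> *\<^sub>R (l * y))"
      by (simp add: algebra_simps)
    also have "\<dots> \<le> (1 - \<mu>) * F (l * x) + \<mu> * F (l * y)"
      using \<mu> xy \<open>0 < l\<close> by (intro convex_onD[OF cvx]) auto
    finally have "F (l * ((1 - \<mu>) *\<^sub>R x + \<mu> *\<^sub>R y)) / l powr P \<le>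
        ((1 - \<mu>) * F (l * x) + \<mu> * F (l * y)) / l powr P"
      by (rule divide_right_mono) simp
    also have "\<dots> = (1 - \<mu>) * (F (l * x) / l powr P) + \<mu> * (F (l * y) / l powr P)"
      by (simp add: add_divide_distrib)
    also have "\<dots> \<le> (1 - \<mu>) * (SUP l\<in>L. F (l * x) / l powr P) + \<mu> * (SUP l\<in>L. F (l * y) / l powr P)"
      using \<mu> xy \<open>l \<in> L\<close> by (intro add_mono mult_left_mono cSUP_upper bdd_above_dilations) auto
    finally show "F (l * ((1 - \<mu>) *\<^sub>R x + \<mu> *\<^sub>R y)) / l powr P \<le>
        (1 - \<mu>) * (SUP l\<in>L. F (l * x) / l powr P) + \<mu> * (SUP l\<in>L. F (l * y) / l powr P)" .
  qed
qed simp

lemma young_function_dilation_sup: "young_function (dilation_sup F L P)"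
proof -
  have F: "\<forall>t\<ge>0. 0 \<le> F t" "F 0 = 0" "\<forall>t>0. 0 < F t" "filterlim F at_top at_top"
    using young by (simp_all add: young_function_def)
  have "\<forall>t\<ge>0. 0 \<le> dilation_sup F L P t"
    using F(1) le_dilation_sup by fastforce
  moreover have "0 < dilation_sup F L P t" if "0 < t" for t
    using F(3) le_dilation_sup[of t] that by force
  moreover have "dilation_sup F L P 0 = 0"
    using dilation_sup_le[of 0] le_dilation_sup[of 0] F(2) by simp
  moreover have "eventually (\<lambda>t. F t \<le> dilation_sup F L P t) at_top"
    using eventually_ge_at_top[of 0] by eventually_elim (rule le_dilation_sup)
  then have "filterlim (dilation_sup F L P) at_top at_top"
    using F(4) by (rule filterlim_at_top_mono[rotated])
  ultimately show ?thesis
    using convex_on_dilation_sup by (simp add: young_function_def)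
qed

lemma young_equiv_dilation_sup: "young_equiv F (dilation_sup F L P)"
proof -
  have "1 \<le> K"
    using dilation_bound[of 1 1] one_in_L young_function_pos[OF young, of 1] by simp
  moreover have "F t \<le> K * dilation_sup F L P t" if "0 \<le> t" for t
  proof -
    have "0 \<le> dilation_sup F L P t"
      using young_function_dilation_sup that by (simp add: young_function_def)
    then have "dilation_sup F L P t \<le> K * dilation_sup F L P t"
      using \<open>1 \<le> K\<close> by (simp add: mult_le_cancel_right1)
    with le_dilation_sup[OF that] show ?thesis
      by linarith
  qed
  moreover have "dilation_sup F L P t / K \<le> F t" if "0 \<le> t" for t
    using dilation_sup_le[OF that] \<open>1 \<le> K\<close> by (simp add: divide_le_eq mult.commute)
  ultimately show ?thesis
    unfolding young_equiv_def using young young_function_dilation_sup by blast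
qed

lemma dilation_sup_dilation_le:
  assumes "0 < s" "0 \<le> t" and closed: "\<And>l. l \<in> L \<Longrightarrow> l * s \<in> L"
  shows "dilation_sup F L P (s * t) \<le> s powr P * dilation_sup F L P t"
  unfolding dilation_sup_def
proof (rule cSUP_least)
  show "L \<noteq> {}"
    using one_in_L by blast
  fix l
  assume "l \<in> L"
  then have "0 < l"
    using L_pos by auto
  have "F ((l * s) * t) / (l * s) powr P \<le> (SUP l\<in>L. F (l * t) / l powr P)"
    using closed[OF \<open>l \<in> L\<close>] assms by (intro cSUP_upper bdd_above_dilations)
  then show "F (l * (s * t)) / l powr P \<le> s powr P * (SUP l\<in>L. F (l * t) / l powr P)"
    using \<open>0 < l\<close> \<open>0 < s\<close> by (simp add: powr_mult mult.assoc field_simps)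
qed

end

lemma exists_young_equiv_upper_index_le:
  assumes F: "young_function F"
    and bound: "\<And>t s. 0 < t \<Longrightarrow> 1 \<le> s \<Longrightarrow> F (s * t) \<le> K * (s powr P * F t)"
  shows "\<exists>G. young_equiv F G \<and> upper_index G \<le> ereal P"
proof -
  have L: "{1..} \<subseteq> ({0<..} :: real set)" "(1 :: real) \<in> {1..}"
    by auto
  have dilation_bound: "F (l * t) / l powr P \<le> K * F t" if "0 \<le> t" "l \<in> {1..}" for t l
  proof (cases "t = 0")
    case True
    with F show ?thesis
      by (simp add: young_function_def)
  next
    case False
    with bound[of t l] that show ?thesis
      by (simp add: divide_le_eq mult_ac)
  qed
  define G where "G = dilation_sup F {1..} P"
  have "young_equiv F G" and G: "young_function G"
    unfolding G_def using young_equiv_dilation_sup young_function_dilation_sup F L dilation_bound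
    by blast+
  moreover have "index_ratio G t \<le> P" if "0 < t" for t
  proof (rule dilation_le_imp_index_ratio_le[OF G that])
    fix s :: real
    assume "1 \<le> s"
    then show "G (s * t) \<le> s powr P * G t"
      unfolding G_def using that
      by (intro dilation_sup_dilation_le[OF F L dilation_bound]) (use mult_mono[of 1 _ 1 s] in auto)
  qed
  ultimately show ?thesis
    by (auto simp: upper_index_le_iff)
qed

lemma exists_young_equiv_lower_index_ge:
  assumes F: "young_function F"
    and bound: "\<And>t s. 0 < t \<Longrightarrow> 1 \<le> s \<Longrightarrow> s powr Q * F t \<le> K * F (s * t)"
  shows "\<exists>G. young_equiv F G \<and> ereal Q \<le> lower_index G"
proof -
  have L: "{0<..1} \<subseteq> ({0<..} :: real set)" "(1 :: real) \<in> {0<..1}"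
    by auto
  have dilation_bound: "F (l * t) / l powr Q \<le> K * F t" if "0 \<le> t" "l \<in> {0<..1}" for t l
  proof (cases "t = 0")
    case True
    with F show ?thesis
      by (simp add: young_function_def)
  next
    case False
    with bound[of "l * t" "1 / l"] that show ?thesis
      by (simp add: powr_divide divide_le_eq mult_ac)
  qed
  define G where "G = dilation_sup F {0<..1} Q"
  have "young_equiv F G" and G: "young_function G"
    unfolding G_def using young_equiv_dilation_sup young_function_dilation_sup F L dilation_bound
    by blast+
  moreover have "Q \<le> index_ratio G t" if "0 < t" for t
  proof (rule dilation_ge_imp_index_ratio_ge[OF G that])
    fix s :: real
    assume "1 \<le> s"
    then have "G ((1 / s) * (s * t)) \<le> (1 / s) powr Q * G (s * t)"
      unfolding G_def using that
      by (intro dilation_sup_dilation_le[OF F L dilation_bound]) (auto simp: field_simps)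
    with \<open>1 \<le> s\<close> show "s powr Q * G t \<le> G (s * t)"
      by (simp add: powr_divide field_simps)
  qed
  ultimately show ?thesis
    by (auto simp: lower_index_ge_iff)
qed

context
  fixes \<Phi> :: "real \<Rightarrow> real" and p0 pinf :: real
  assumes young: "young_function \<Phi>"
    and lim0: "(index_ratio \<Phi> \<longlongrightarrow> p0) (at_right 0)"
    and lim_top: "(index_ratio \<Phi> \<longlongrightarrow> pinf) at_top"
begin

lemma exists_dilation_ge:
  assumes "P < max p0 pinf" and "1 \<le> s"
  shows "\<exists>t>0. s powr P * \<Phi> t \<le> \<Phi> (s * t)"
proof -
  have "P < pinf \<or> P < p0"
    using assms(1) by (auto simp: less_max_iff_disj)
  then have "eventually (\<lambda>r. P < index_ratio \<Phi> r) at_top \<or>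
      eventually (\<lambda>r. P < index_ratio \<Phi> r) (at_right 0)"
    using order_tendstoD(1)[OF lim_top] order_tendstoD(1)[OF lim0] by blast
  then obtain t where "0 < t" and "\<forall>r\<in>{t..<s * t}. P < index_ratio \<Phi> r"
    using eventually_imp_dilation_interval \<open>1 \<le> s\<close> by blast
  then have "s powr P * \<Phi> t \<le> \<Phi> (s * t)"
    by (intro index_ratio_ge_imp_dilation_ge[OF young _ \<open>1 \<le> s\<close>]) (auto simp: less_imp_le)
  with \<open>0 < t\<close> show ?thesis
    by blast
qed

lemma exists_dilation_le:
  assumes "min p0 pinf < Q" and "1 \<le> s"
  shows "\<exists>t>0. \<Phi> (s * t) \<le> s powr Q * \<Phi> t"
proof -
  have "pinf < Q \<or> p0 < Q"
    using assms(1) by (auto simp: min_less_iff_disj)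
  then have "eventually (\<lambda>r. index_ratio \<Phi> r < Q) at_top \<or>
      eventually (\<lambda>r. index_ratio \<Phi> r < Q) (at_right 0)"
    using order_tendstoD(2)[OF lim_top] order_tendstoD(2)[OF lim0] by blast
  then obtain t where "0 < t" and "\<forall>r\<in>{t..<s * t}. index_ratio \<Phi> r < Q"
    using eventually_imp_dilation_interval \<open>1 \<le> s\<close> by blast
  then have "\<Phi> (s * t) \<le> s powr Q * \<Phi> t"
    by (intro index_ratio_le_imp_dilation_le[OF young _ \<open>1 \<le> s\<close>]) (auto simp: less_imp_le)
  with \<open>0 < t\<close> show ?thesis
    by blast
qed

lemma young_equiv_imp_upper_index_ge:
  assumes "young_equiv \<Phi> G"
  shows "ereal (max p0 pinf) \<le> upper_index G"
proof (rule dense_ge)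
  fix y
  assume "upper_index G < y"
  then obtain U where U: "upper_index G < ereal U" "ereal U < y"
    using ereal_dense2 by blast
  have ratio: "\<And>t. 0 < t \<Longrightarrow> index_ratio G t \<le> U"
    using less_imp_le[OF U(1)] unfolding upper_index_le_iff by blast
  have "P \<le> U" if "P < max p0 pinf" for P
    by (rule young_equiv_exponent_le[OF assms ratio exists_dilation_ge[OF that]])
  then have "max p0 pinf \<le> U"
    by (rule dense_le)
  with U(2) show "ereal (max p0 pinf) \<le> y"
    by (rule less_imp_le[OF ereal_less_le])
qed

lemma young_equiv_imp_lower_index_le:
  assumes "young_equiv \<Phi> G"
  shows "lower_index G \<le> ereal (min p0 pinf)"
proof (rule dense_le)
  fix y
  assume "y < lower_index G"
  then obtain L where L: "y < ereal L" "ereal L < lower_index G"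
    using ereal_dense2 by blast
  have ratio: "\<And>t. 0 < t \<Longrightarrow> L \<le> index_ratio G t"
    using less_imp_le[OF L(2)] unfolding lower_index_ge_iff by blast
  have "L \<le> Q" if "min p0 pinf < Q" for Q
    by (rule young_equiv_exponent_ge[OF assms ratio exists_dilation_le[OF that]])
  then have "L \<le> min p0 pinf"
    by (rule dense_ge)
  with L(1) show "y \<le> ereal (min p0 pinf)"
    by (rule less_imp_le[OF less_ereal_le])
qed

lemma upper_index_class_ge: "ereal (max p0 pinf) \<le> upper_index_class \<Phi>"
  unfolding upper_index_class_def young_class_def
  by (intro INF_greatest young_equiv_imp_upper_index_ge) simp

lemma lower_index_class_le: "lower_index_class \<Phi> \<le> ereal (min p0 pinf)"
  unfolding lower_index_class_def young_class_def
  by (intro SUP_least young_equiv_imp_lower_index_le) simp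

lemma upper_index_class_le: "upper_index_class \<Phi> \<le> ereal (max p0 pinf)"
proof (rule dense_ge)
  fix y
  assume "ereal (max p0 pinf) < y"
  then obtain P where "ereal (max p0 pinf) < ereal P" "ereal P < y"
    using ereal_dense2 by blast
  then have "p0 < P" "pinf < P"
    by simp_all
  then have "eventually (\<lambda>r. index_ratio \<Phi> r \<le> P) (at_right 0)"
      "eventually (\<lambda>r. index_ratio \<Phi> r \<le> P) at_top"
    using order_tendstoD(2)[OF lim0 \<open>p0 < P\<close>] order_tendstoD(2)[OF lim_top \<open>pinf < P\<close>]
    by (auto elim: eventually_mono)
  then obtain K where "\<forall>t s. 0 < t \<longrightarrow> 1 \<le> s \<longrightarrow> \<Phi> (s * t) \<le> K * (s powr P * \<Phi> t)"
    using index_ratio_le_near_ends_imp_dilation_bound[OF young] by blast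
  then obtain G where "young_equiv \<Phi> G" "upper_index G \<le> ereal P"
    using exists_young_equiv_upper_index_le[OF young] by blast
  then have "upper_index_class \<Phi> \<le> ereal P"
    unfolding upper_index_class_def young_class_def by (auto intro: INF_lower2)
  with \<open>ereal P < y\<close> show "upper_index_class \<Phi> \<le> y"
    by simp
qed

lemma lower_index_class_ge: "ereal (min p0 pinf) \<le> lower_index_class \<Phi>"
proof (rule dense_le)
  fix y
  assume "y < ereal (min p0 pinf)"
  then obtain Q where "y < ereal Q" "ereal Q < ereal (min p0 pinf)"
    using ereal_dense2 by blast
  then have "Q < p0" "Q < pinf"
    by simp_all
  then have "eventually (\<lambda>r. Q \<le> index_ratio \<Phi> r) (at_right 0)"
      "eventually (\<lambda>r. Q \<le> index_ratio \<Phi> r) at_top"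
    using order_tendstoD(1)[OF lim0 \<open>Q < p0\<close>] order_tendstoD(1)[OF lim_top \<open>Q < pinf\<close>]
    by (auto elim: eventually_mono)
  then obtain K where "\<forall>t s. 0 < t \<longrightarrow> 1 \<le> s \<longrightarrow> s powr Q * \<Phi> t \<le> K * \<Phi> (s * t)"
    using index_ratio_ge_near_ends_imp_dilation_bound[OF young] by blast
  then obtain G where "young_equiv \<Phi> G" "ereal Q \<le> lower_index G"
    using exists_young_equiv_lower_index_ge[OF young] by blast
  then have "ereal Q \<le> lower_index_class \<Phi>"
    unfolding lower_index_class_def young_class_def by (auto intro: SUP_upper2)
  with \<open>y < ereal Q\<close> show "y \<le> lower_index_class \<Phi>"
    by simp
qed

end

theorem mainTheorem12:
  fixes \<Phi> :: "real \<Rightarrow> real" and p0 pinf :: real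
  assumes "young_function \<Phi>"
    and "((\<lambda>t. t * rderiv \<Phi> t / \<Phi> t) \<longlongrightarrow> p0) (at_right 0)"
    and "((\<lambda>t. t * rderiv \<Phi> t / \<Phi> t) \<longlongrightarrow> pinf) at_top"
  shows "upper_index_class \<Phi> = ereal (max p0 pinf)
       \<and> lower_index_class \<Phi> = ereal (min p0 pinf)"
proof -
  have "(index_ratio \<Phi> \<longlongrightarrow> p0) (at_right 0)" "(index_ratio \<Phi> \<longlongrightarrow> pinf) at_top"
    using assms(2,3) unfolding index_ratio_def[abs_def] .
  with assms(1) show ?thesis
    using upper_index_class_ge upper_index_class_le lower_index_class_ge lower_index_class_le
    by (meson antisym)
qed

end
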